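(* Let $R$ be an ri function norm admitting the representation $R(X)=\sup\{\int_0^1X^*(\omega)Y^*(\omega)\,d\omega:\mathbb{E}[Y]=R'(Y)=1,\ Y\in\mathcal{M}^+\}$ for all $X\in\mathcal{M}^+$. Then the functional \[ R^-(X)=\sup\left\{\int_0^1X^{*-}(\omega)Y^*(\omega)\,d\omega:\ \mathbb{E}[Y]=R'(Y)=1,\ Y\in\mathcal{M}^+\right\},\quad X\in\mathcal{M}, \] is a law invariant coherent risk measure, coincides with $R$ on $\mathcal{M}^+$, and is translation equivariant: $R^-(X+c)=R^-(X)+c$ for all $c\in\mathbb{R}$.
   Context: $\Omega=[0,1]$ with Lebesgue measure $\mu$, $\mathbb{E}[Y]=\int Y\,d\mu$; $\mathcal{M}$ measurable real functions, $\mathcal{M}^+$ those with values in $[0,\infty]$. An ri function norm is $R:\mathcal{M}^+\to[0,\infty]$ satisfying: $R(X)=0\iff X=0$, positive homogeneity, subadditivity, monotonicity, Fatou property, $R(\chi_E)<\infty$ and $\int_EX\,d\mu\le c_ER(X)$ for constants $c_E$, normalisation $R(\chi_\Omega)=1$, and $R(X)=R(Y)$ for equimeasurable $X,Y$. $X^*(\omega)=\inf\{\lambda\ge0:\mu\{|X|>\lambda\}\le\omega\}$; $X^{*-}(\omega)=\inf\{\lambda\in\mathbb{R}:\mu\{X>\lambda\}\le\omega\}$; $R'(Y)=\sup\{\int_0^1Y^*Z^*\,d\omega:R(Z)\le1, Z\in\mathcal{M}^+\}$ is the associate norm. A coherent risk measure is a functional $\rho$ on $\mathcal{M}$ that is positively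 homogeneous, subadditive, translation equivariant ($\rho(X+c)=\rho(X)+c$) and monotone ($X\le Y$ a.s. $\Rightarrow\rho(X)\le\rho(Y)$); it is law invariant if $\rho(X)=\rho(X')$ whenever $X,X'$ have the same distribution. *)

theory Defs
  imports "HOL-Analysis.Analysis"
begin

definition Omega :: "real measure" where
  "Omega = lebesgue_on {0..1}"

definition Mplus :: "(real \<Rightarrow> ennreal) set" where
  "Mplus = borel_measurable Omega"

definition Mreal :: "(real \<Rightarrow> real) set" where
  "Mreal = borel_measurable Omega"

definition dec_rearr :: "(real \<Rightarrow> ennreal) \<Rightarrow> real \<Rightarrow> ennreal" where
  "dec_rearr X w = Inf {l. emeasure Omega {x \<in> space Omega. X x > l} \<le> ennreal w}"

definition dec_rearr_minus :: "(real \<Rightarrow> real) \<Rightarrow> real \<Rightarrow> ereal" where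
  "dec_rearr_minus X w =
     Inf {ereal l | l. emeasure Omega {x \<in> space Omega. X x > l} \<le> ennreal w}"

text \<open>Integral over [0,1] of an extended-real function: positive part minus negative part
  (with the ereal convention \<infinity> - \<infinity> = \<infinity>).\<close>
definition Eint :: "(real \<Rightarrow> ereal) \<Rightarrow> ereal" where
  "Eint g = enn2ereal (\<integral>\<^sup>+ w. e2ennreal (g w) \<partial>Omega)
          - enn2ereal (\<integral>\<^sup>+ w. e2ennreal (- g w) \<partial>Omega)"

definition ri_function_norm :: "((real \<Rightarrow> ennreal) \<Rightarrow> ennreal) \<Rightarrow> bool" where
  "ri_function_norm R \<longleftrightarrow>
     (\<forall>X\<in>Mplus. R X = 0 \<longleftrightarrow> (AE x in Omega. X x = 0)) \<and>
     (\<forall>X\<in>Mplus. \<forall>a::real. a \<ge> 0 \<longrightarrow> R (\<lambda>x. ennreal a * X x) = ennreal a * R X) \<and>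
     (\<forall>X\<in>Mplus. \<forall>Y\<in>Mplus. R (\<lambda>x. X x + Y x) \<le> R X + R Y) \<and>
     (\<forall>X\<in>Mplus. \<forall>Y\<in>Mplus. (AE x in Omega. X x \<le> Y x) \<longrightarrow> R X \<le> R Y) \<and>
     (\<forall>Xs X. (\<forall>n. Xs n \<in> Mplus) \<longrightarrow> X \<in> Mplus \<longrightarrow>
        (AE x in Omega. incseq (\<lambda>n. Xs n x) \<and> X x = (SUP n. Xs n x)) \<longrightarrow>
        R X = (SUP n. R (Xs n))) \<and>
     (\<forall>E\<in>sets Omega. R (indicator E) < \<infinity> \<and>
        (\<exists>c::real. \<forall>X\<in>Mplus. set_nn_integral Omega E X \<le> ennreal c * R X)) \<and>
     R (indicator (space Omega)) = 1 \<and>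
     (\<forall>X\<in>Mplus. \<forall>Y\<in>Mplus.
        (\<forall>l::real. l \<ge> 0 \<longrightarrow>
           emeasure Omega {x \<in> space Omega. X x > ennreal l}
           = emeasure Omega {x \<in> space Omega. Y x > ennreal l}) \<longrightarrow> R X = R Y)"

definition assoc_norm :: "((real \<Rightarrow> ennreal) \<Rightarrow> ennreal) \<Rightarrow> (real \<Rightarrow> ennreal) \<Rightarrow> ennreal" where
  "assoc_norm R Y = (SUP Z \<in> {Z \<in> Mplus. R Z \<le> 1}.
      \<integral>\<^sup>+ w. dec_rearr Y w * dec_rearr Z w \<partial>Omega)"

definition Dset :: "((real \<Rightarrow> ennreal) \<Rightarrow> ennreal) \<Rightarrow> (real \<Rightarrow> ennreal) set" where
  "Dset R = {Y \<in> Mplus. (\<integral>\<^sup>+ x. Y x \<partial>Omega) = 1 \<and> assoc_norm R Y = 1}"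

definition Rminus :: "((real \<Rightarrow> ennreal) \<Rightarrow> ennreal) \<Rightarrow> (real \<Rightarrow> real) \<Rightarrow> ereal" where
  "Rminus R X = (SUP Y \<in> Dset R.
      Eint (\<lambda>w. dec_rearr_minus X w * enn2ereal (dec_rearr Y w)))"

definition coherent_risk_measure :: "((real \<Rightarrow> real) \<Rightarrow> ereal) \<Rightarrow> bool" where
  "coherent_risk_measure \<rho> \<longleftrightarrow>
     (\<forall>X\<in>Mreal. \<forall>a::real. a \<ge> 0 \<longrightarrow> \<rho> (\<lambda>x. a * X x) = ereal a * \<rho> X) \<and>
     (\<forall>X\<in>Mreal. \<forall>Y\<in>Mreal. \<rho> (\<lambda>x. X x + Y x) \<le> \<rho> X + \<rho> Y) \<and>
     (\<forall>X\<in>Mreal. \<forall>c::real. \<rho> (\<lambda>x. X x + c) = \<rho> X + ereal c) \<and>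
     (\<forall>X\<in>Mreal. \<forall>Y\<in>Mreal. (AE x in Omega. X x \<le> Y x) \<longrightarrow> \<rho> X \<le> \<rho> Y)"

definition law_invariant :: "((real \<Rightarrow> real) \<Rightarrow> ereal) \<Rightarrow> bool" where
  "law_invariant \<rho> \<longleftrightarrow>
     (\<forall>X\<in>Mreal. \<forall>X'\<in>Mreal. distr Omega borel X = distr Omega borel X' \<longrightarrow> \<rho> X = \<rho> X')"

end

(*
  The quantile X^{*-} is governed by the Galois connection  l < X^{*-}(w)  iff  w < mu{X > l},
  which holds because the survival function l |-> mu{X > l} is right continuous.  Hence X^{*-}
  is antitone, equimeasurable with X, and commutes with positive scaling, constants and a.s.
  monotonicity; this gives positive homogeneity, monotonicity, law invariance and R^- = R on M^+
  term by term in the supremum defining R^-.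

  Subadditivity is the Hardy-Littlewood inequality: for 0 < t < 1 and a = X^{*-}(t) one has
  int_0^t X^{*-} = a t + E (X - a)^+, whereas int_0^t (X + Y)^{*-} <= c t + E (X + Y - c)^+ for
  every c, and (X + Y - a - b)^+ <= (X - a)^+ + (Y - b)^+.  The layer cake formula writes the
  decreasing weight Y^* as a superposition of the indicators of [0, mu{Y > s}), which transfers
  the inequality to int X^{*-} Y^*.  As these integrals may be infinite, positive and negative
  parts are kept apart in [0, infinity].  Translation equivariance follows from subadditivity
  and R^-(c) = c, the latter because E Y^* = E Y = 1 on the dual set.
*)

theory Submission
  imports Defs "HOL-Probability.Probability_Measure"
begin

lemma space_Omega: "space Omega = {0..1}"
  by (simp add: Omega_def)

lemma sets_Omega_iff: "A \<in> sets Omega \<longleftrightarrow> A \<in> sets lebesgue \<and> A \<subseteq> {0..1}"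
  unfolding Omega_def by (auto simp: sets_restrict_space_iff)

lemma emeasure_Omega: "A \<in> sets Omega \<Longrightarrow> emeasure Omega A = emeasure lebesgue A"
  unfolding Omega_def by (subst emeasure_restrict_space) (auto simp: sets_restrict_space_iff)

lemma emeasure_Omega_atLeastLessThan: "0 \<le> t \<Longrightarrow> t \<le> 1 \<Longrightarrow> emeasure Omega {0..<t} = ennreal t"
  by (subst emeasure_Omega) (auto simp: sets_Omega_iff)

lemma prob_space_Omega: "prob_space Omega"
  by (rule prob_spaceI) (simp add: space_Omega emeasure_Omega sets_Omega_iff)

interpretation Omega: prob_space Omega
  by (rule prob_space_Omega)

lemma emeasure_Omega_ennreal_less:
  assumes "t \<le> 1"
  shows "emeasure Omega {w \<in> space Omega. ennreal w < t} = t"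
proof -
  obtain r where r: "t = ennreal r" "0 \<le> r" "r \<le> 1"
    using assms by (cases t) (auto simp: ennreal_le_iff2 top_unique)
  then have "{w \<in> space Omega. ennreal w < t} = {0..<r}"
    by (auto simp: space_Omega ennreal_less_iff)
  then show ?thesis using r by (simp add: emeasure_Omega_atLeastLessThan)
qed

lemma AE_Omega_less_1: "AE w in Omega. 0 \<le> w \<and> w < 1"
proof (rule AE_I')
  show "{1} \<in> null_sets Omega" by (simp add: null_sets_def emeasure_Omega sets_Omega_iff)
qed (auto simp: space_Omega)

lemma borel_measurable_Omega_ident: "(\<lambda>w. w) \<in> borel_measurable Omega"
  unfolding Omega_def
  by (rule continuous_imp_measurable_on_sets_lebesgue) (auto intro: continuous_intros)

lemma sets_Omega_ennreal_less[measurable]: "{w \<in> space Omega. ennreal w < c} \<in> sets Omega"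
  using borel_measurable_Omega_ident by measurable

section \<open>Survival functions and quantiles\<close>

definition survival :: "'a measure \<Rightarrow> ('a \<Rightarrow> 'b::order) \<Rightarrow> 'b \<Rightarrow> ennreal" where
  "survival M X l = emeasure M {x \<in> space M. l < X x}"

lemma survival_antimono:
  fixes X :: "'a \<Rightarrow> 'b::{linorder_topology, second_countable_topology}"
  assumes "X \<in> borel_measurable M" "l \<le> l'"
  shows "survival M X l' \<le> survival M X l"
  unfolding survival_def using assms by (intro emeasure_mono) auto

lemma survival_right_continuous:
  fixes X :: "'a \<Rightarrow> 'b::{linorder_topology, dense_linorder, second_countable_topology}"
  assumes X[measurable]: "X \<in> borel_measurable M" and w: "w < survival M X l"
  obtains l' where "l < l'" "w < survival M X l'"
proof -
  obtain b where "l < b"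
  proof (cases "\<exists>b. l < b")
    case False
    then have "{x \<in> space M. l < X x} = {}" by auto
    with w show ?thesis by (simp add: survival_def)
  qed blast
  have "eventually (\<lambda>l'. w < survival M X l') (at_right l)"
  proof (rule sequentially_imp_eventually_at_right[OF \<open>l < b\<close>])
    fix u assume u: "\<And>n. l < u n" "decseq u" "u \<longlonglongrightarrow> l"
    let ?A = "\<lambda>n. {x \<in> space M. u n < X x}"
    have "\<exists>n. u n < X x" if "l < X x" for x
      using order_tendstoD(2)[OF u(3) that] by (auto simp: eventually_sequentially)
    then have "(\<Union>n. ?A n) = {x \<in> space M. l < X x}"
      using u(1) by (auto dest: less_trans)
    moreover have "incseq ?A"
      using u(2) by (auto simp: incseq_def decseq_def intro: le_less_trans)
    ultimately have "(\<lambda>n. survival M X (u n)) \<longlonglongrightarrow> survival M X l"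
      unfolding survival_def using Lim_emeasure_incseq[of ?A M] by fastforce
    then show "eventually (\<lambda>n. w < survival M X (u n)) sequentially"
      using w by (rule order_tendstoD(1))
  qed
  then obtain b' where "l < b'" "\<forall>y>l. y < b' \<longrightarrow> w < survival M X y"
    using eventually_at_right[OF \<open>l < b\<close>] by auto
  then show ?thesis using dense[OF \<open>l < b'\<close>] that by blast
qed

lemma survival_eq_emeasure_distr:
  fixes X :: "'a \<Rightarrow> 'b::linorder_topology"
  assumes "X \<in> borel_measurable M"
  shows "survival M X l = emeasure (distr M borel X) {l<..}"
proof -
  note assms
  moreover have "X -` {l<..} \<inter> space M = {x \<in> space M. l < X x}" by auto
  ultimately show ?thesis
    using emeasure_distr[of X M borel "{l<..}"] by (simp add: survival_def borel_open)
qed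

lemma SUP_survival_minus_nat:
  fixes X :: "'a \<Rightarrow> real"
  assumes [measurable]: "X \<in> borel_measurable M"
  shows "(SUP n::nat. survival M X (- real n)) = emeasure M (space M)"
proof -
  let ?A = "\<lambda>n::nat. {x \<in> space M. - real n < X x}"
  have "?A n \<in> sets M" for n by measurable
  moreover have "incseq ?A"
    by (auto simp: incseq_def intro: le_less_trans[rotated])
  ultimately have "(SUP n. emeasure M (?A n)) = emeasure M (\<Union>n. ?A n)"
    by (intro SUP_emeasure_incseq) auto
  moreover have "(\<Union>n. ?A n) = space M"
    using reals_Archimedean2 by (force simp: minus_less_iff)
  ultimately show ?thesis by (simp add: survival_def)
qed

lemma INF_survival_nat:
  fixes X :: "'a \<Rightarrow> real"
  assumes "finite_measure M" and [measurable]: "X \<in> borel_measurable M"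
  shows "(INF n::nat. survival M X (real n)) = 0"
proof -
  let ?A = "\<lambda>n::nat. {x \<in> space M. real n < X x}"
  have "?A n \<in> sets M" for n by measurable
  moreover have "decseq ?A"
    by (auto simp: decseq_def intro: le_less_trans)
  ultimately have "(INF n. emeasure M (?A n)) = emeasure M (\<Inter>n. ?A n)"
    using finite_measure.emeasure_finite[OF assms(1)] by (intro INF_emeasure_decseq) auto
  moreover have "(\<Inter>n. ?A n) = {}"
  proof -
    have "\<exists>n::nat. x \<notin> ?A n" for x
      using reals_Archimedean2[of "X x"] by (auto simp: not_less intro: less_imp_le)
    then show ?thesis by blast
  qed
  ultimately show ?thesis by (simp add: survival_def)
qed

lemma survival_Omega_le_1: "survival Omega X l \<le> 1"
  by (simp add: survival_def Omega.emeasure_le_1)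

lemma survival_const: "survival Omega (\<lambda>_. c) l = (if l < c then 1 else 0)"
  by (simp add: survival_def Omega.emeasure_space_1)

lemma less_Inf_image_sublevel_iff:
  fixes e :: "'b::linorder \<Rightarrow> 'c::complete_linorder" and T :: "'b \<Rightarrow> 'd::linorder"
  assumes e: "strict_mono e" and T: "antimono T" and T_cont: "w < T l \<Longrightarrow> \<exists>l'>l. w < T l'"
  shows "e l < Inf (e ` {l. T l \<le> w}) \<longleftrightarrow> w < T l"
proof
  assume less: "e l < Inf (e ` {l. T l \<le> w})"
  show "w < T l"
  proof (rule ccontr)
    assume "\<not> w < T l"
    then have "Inf (e ` {l. T l \<le> w}) \<le> e l" by (intro Inf_lower) auto
    with less show False by simp
  qed
next
  assume "w < T l"
  then obtain l' where "l < l'" "w < T l'" using T_cont by blast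
  have less: "e l < e l'" using e \<open>l < l'\<close> by (rule strict_monoD)
  have "e l' \<le> Inf (e ` {l. T l \<le> w})"
  proof (rule Inf_greatest, clarify)
    fix l'' assume "T l'' \<le> w"
    with \<open>w < T l'\<close> have "l' \<le> l''" using antimonoD[OF T, of l'' l'] by fastforce
    then show "e l' \<le> e l''" using e by (simp add: strict_mono_less_eq)
  qed
  with less show "e l < Inf (e ` {l. T l \<le> w})" by (rule less_le_trans)
qed

lemma ereal_less_dec_rearr_minus_iff:
  assumes "X \<in> borel_measurable Omega"
  shows "ereal l < dec_rearr_minus X w \<longleftrightarrow> ennreal w < survival Omega X l"
proof -
  have "dec_rearr_minus X w = Inf (ereal ` {l. survival Omega X l \<le> ennreal w})"
    unfolding dec_rearr_minus_def survival_def by (simp add: setcompr_eq_image)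
  also have "ereal l < \<dots> \<longleftrightarrow> ennreal w < survival Omega X l"
    using assms
    by (intro less_Inf_image_sublevel_iff)
       (auto intro: strict_monoI antimonoI survival_antimono elim: survival_right_continuous)
  finally show ?thesis .
qed

lemma less_dec_rearr_iff:
  assumes "Y \<in> borel_measurable Omega"
  shows "l < dec_rearr Y w \<longleftrightarrow> ennreal w < survival Omega Y l"
proof -
  have "id l < Inf (id ` {l. survival Omega Y l \<le> ennreal w}) \<longleftrightarrow> ennreal w < survival Omega Y l"
    using assms
    by (intro less_Inf_image_sublevel_iff)
       (auto intro: strict_monoI antimonoI survival_antimono elim: survival_right_continuous)
  then show ?thesis by (simp add: dec_rearr_def survival_def)
qed

lemma ereal_eqI_less_real:
  fixes x y :: ereal
  assumes "\<And>l. ereal l < x \<longleftrightarrow> ereal l < y"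
  shows "x = y"
  by (meson assms ereal_dense2 not_less_iff_gr_or_eq)

lemma borel_measurable_ereal_greaterI:
  fixes f :: "'a \<Rightarrow> ereal"
  assumes "\<And>l. {x \<in> space M. ereal l < f x} \<in> sets M"
  shows "f \<in> borel_measurable M"
proof (rule borel_measurableI_greater)
  fix y :: ereal
  show "{x \<in> space M. y < f x} \<in> sets M"
  proof (cases y)
    case MInf
    have "\<exists>n::nat. ereal (- real n) < z" if z: "- \<infinity> < z" for z :: ereal
    proof -
      obtain r where r: "ereal r < z" using ereal_dense2[OF z] by blast
      obtain n :: nat where "- r < real n" using reals_Archimedean2 by blast
      then have "ereal (- real n) < ereal r" by simp
      then show ?thesis using r by (blast intro: less_trans)
    qed
    then have "{x \<in> space M. y < f x} = (\<Union>n::nat. {x \<in> space M. ereal (- real n) < f x})"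
      using MInf by (auto intro: less_trans)
    then show ?thesis using assms by auto
  qed (use assms in auto)
qed

lemma borel_measurable_dec_rearr_minus:
  "X \<in> borel_measurable Omega \<Longrightarrow> dec_rearr_minus X \<in> borel_measurable Omega"
  by (rule borel_measurable_ereal_greaterI) (simp add: ereal_less_dec_rearr_minus_iff)

lemma borel_measurable_dec_rearr:
  "Y \<in> borel_measurable Omega \<Longrightarrow> dec_rearr Y \<in> borel_measurable Omega"
  by (rule borel_measurableI_greater) (simp add: less_dec_rearr_iff)

lemma dec_rearr_minus_antimono: "w \<le> w' \<Longrightarrow> dec_rearr_minus X w' \<le> dec_rearr_minus X w"
  unfolding dec_rearr_minus_def by (rule Inf_superset_mono) (auto intro: order_trans[OF _ ennreal_leI])

lemma dec_rearr_minus_real: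
  assumes X: "X \<in> borel_measurable Omega" and t: "0 < t" "t < 1"
  obtains a where "dec_rearr_minus X t = ereal a"
proof -
  have "ennreal t < 1" using t by (simp add: ennreal_less_iff)
  then have "ennreal t < (SUP n::nat. survival Omega X (- real n))"
    using SUP_survival_minus_nat[OF X] by (simp add: Omega.emeasure_space_1)
  then obtain n :: nat where "ennreal t < survival Omega X (- real n)"
    by (auto simp: less_SUP_iff)
  then have "dec_rearr_minus X t \<noteq> - \<infinity>"
    using ereal_less_dec_rearr_minus_iff[OF X] by force
  moreover have "dec_rearr_minus X t \<noteq> \<infinity>"
  proof
    assume "dec_rearr_minus X t = \<infinity>"
    then have "ennreal t < survival Omega X (real n)" for n :: nat
      using ereal_less_dec_rearr_minus_iff[OF X, of "real n" t] by simp
    then have "ennreal t \<le> (INF n::nat. survival Omega X (real n))"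
      by (intro INF_greatest less_imp_le)
    then show False
      using INF_survival_nat[OF Omega.finite_measure_axioms X] t by simp
  qed
  ultimately show ?thesis using that by (cases "dec_rearr_minus X t") auto
qed

lemma dec_rearr_minus_const:
  "0 \<le> w \<Longrightarrow> w < 1 \<Longrightarrow> dec_rearr_minus (\<lambda>_. c) w = ereal c"
  by (rule ereal_eqI_less_real) (simp add: ereal_less_dec_rearr_minus_iff survival_const ennreal_less_iff)

lemma dec_rearr_minus_cmult:
  assumes X: "X \<in> borel_measurable Omega" and a: "0 < a"
  shows "dec_rearr_minus (\<lambda>x. a * X x) w = ereal a * dec_rearr_minus X w"
proof (rule ereal_eqI_less_real)
  fix l
  have "survival Omega (\<lambda>x. a * X x) l = survival Omega X (l / a)"
    unfolding survival_def using a by (simp add: divide_less_eq mult.commute)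
  then have "ereal l < dec_rearr_minus (\<lambda>x. a * X x) w \<longleftrightarrow> ereal (l / a) < dec_rearr_minus X w"
    using X by (simp add: ereal_less_dec_rearr_minus_iff)
  also have "\<dots> \<longleftrightarrow> ereal l < ereal a * dec_rearr_minus X w"
    using a by (cases "dec_rearr_minus X w") (auto simp: divide_less_eq mult.commute)
  finally show "ereal l < dec_rearr_minus (\<lambda>x. a * X x) w \<longleftrightarrow> ereal l < ereal a * dec_rearr_minus X w" .
qed

lemma dec_rearr_minus_mono_AE:
  assumes X: "X \<in> borel_measurable Omega" and Y: "Y \<in> borel_measurable Omega"
    and le: "AE x in Omega. X x \<le> Y x"
  shows "dec_rearr_minus X w \<le> dec_rearr_minus Y w"
  unfolding dec_rearr_minus_def
proof (rule Inf_superset_mono, safe)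
  fix l assume l: "emeasure Omega {x \<in> space Omega. l < Y x} \<le> ennreal w"
  have "emeasure Omega {x \<in> space Omega. l < X x} \<le> emeasure Omega {x \<in> space Omega. l < Y x}"
    by (rule emeasure_mono_AE) (use le Y in \<open>auto elim!: eventually_mono\<close>)
  with l show "\<exists>l'. ereal l = ereal l' \<and> emeasure Omega {x \<in> space Omega. l' < X x} \<le> ennreal w"
    by auto
qed

lemma dec_rearr_minus_cong_distr:
  assumes "X \<in> borel_measurable Omega" "X' \<in> borel_measurable Omega"
    and "distr Omega borel X = distr Omega borel X'"
  shows "dec_rearr_minus X = dec_rearr_minus X'"
proof -
  have "survival Omega X = survival Omega X'"
    using assms by (simp add: fun_eq_iff survival_eq_emeasure_distr)
  then show ?thesis
    unfolding fun_eq_iff dec_rearr_minus_def survival_def[symmetric] by simp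
qed

lemma dec_rearr_minus_nonneg:
  assumes X: "X \<in> borel_measurable Omega" and pos: "AE x in Omega. 0 \<le> X x"
    and w: "0 \<le> w" "w < 1"
  shows "dec_rearr_minus X w = enn2ereal (dec_rearr (\<lambda>x. ennreal (X x)) w)"
proof (rule ereal_eqI_less_real)
  fix l
  have X': "(\<lambda>x. ennreal (X x)) \<in> borel_measurable Omega" using X by measurable
  show "ereal l < dec_rearr_minus X w \<longleftrightarrow> ereal l < enn2ereal (dec_rearr (\<lambda>x. ennreal (X x)) w)"
  proof (cases "l < 0")
    case True
    have "survival Omega X l = emeasure Omega (space Omega)" unfolding survival_def
      by (rule emeasure_eq_AE) (use pos True X in \<open>auto elim!: eventually_mono\<close>)
    moreover have "ereal l < enn2ereal d" for d
      by (rule less_le_trans[OF _ enn2ereal_nonneg]) (use True in simp)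
    ultimately show ?thesis
      using w by (simp add: ereal_less_dec_rearr_minus_iff[OF X] Omega.emeasure_space_1 ennreal_less_iff)
  next
    case False
    have "survival Omega (\<lambda>x. ennreal (X x)) (ennreal l) = survival Omega X l"
      unfolding survival_def using False by (simp add: ennreal_less_iff)
    moreover have "ereal l < enn2ereal d \<longleftrightarrow> ennreal l < d" for d
      using False by (cases d) (auto simp: ennreal_less_iff)
    ultimately show ?thesis
      by (simp add: ereal_less_dec_rearr_minus_iff[OF X] less_dec_rearr_iff[OF X'])
  qed
qed

section \<open>Layer cake representation and equimeasurability\<close>

lemma emeasure_lborel_ennreal_less: "emeasure lborel {s::real. 0 \<le> s \<and> ennreal s < g} = g"
proof (cases g)
  case (real r)
  then have "{s. 0 \<le> s \<and> ennreal s < g} = {0..<r}"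
    by (auto simp: ennreal_less_iff)
  then show ?thesis using real by simp
next
  case top
  have "of_nat n \<le> emeasure lborel {0::real..}" for n
    using emeasure_mono[of "{0..real n}" "{0..}" lborel] by (simp add: ennreal_of_nat_eq_real_of_nat)
  then have "emeasure lborel {0::real..} = top"
    using ennreal_SUP_of_nat_eq_top by (metis SUP_least top_unique)
  moreover have "{s. 0 \<le> s \<and> ennreal s < g} = {0..}"
    using top by auto
  ultimately show ?thesis using top by simp
qed

lemma nn_integral_layer_cake:
  assumes "sigma_finite_measure M" and [measurable]: "v \<in> borel_measurable M" "G \<in> borel_measurable M"
  shows "(\<integral>\<^sup>+x. v x * G x \<partial>M)
       = (\<integral>\<^sup>+s. (if 0 \<le> s then \<integral>\<^sup>+x\<in>{x \<in> space M. ennreal s < G x}. v x \<partial>M else 0) \<partial>lborel)"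
proof -
  have "v x * G x = (\<integral>\<^sup>+s. (if 0 \<le> s \<and> ennreal s < G x then v x else 0) \<partial>lborel)" for x
  proof -
    have "(\<integral>\<^sup>+s. (if 0 \<le> s \<and> ennreal s < G x then v x else 0) \<partial>lborel)
        = (\<integral>\<^sup>+s. v x * indicator {s. 0 \<le> s \<and> ennreal s < G x} s \<partial>lborel)"
      by (intro nn_integral_cong) auto
    also have "\<dots> = v x * G x"
      by (simp add: nn_integral_cmult_indicator emeasure_lborel_ennreal_less)
    finally show ?thesis ..
  qed
  then have "(\<integral>\<^sup>+x. v x * G x \<partial>M)
      = (\<integral>\<^sup>+x. (\<integral>\<^sup>+s. (if 0 \<le> s \<and> ennreal s < G x then v x else 0) \<partial>lborel) \<partial>M)"
    by simp
  also have "\<dots> = (\<integral>\<^sup>+s. (\<integral>\<^sup>+x. (if 0 \<le> s \<and> ennreal s < G x then v x else 0) \<partial>M) \<partial>lborel)"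
    using assms(1) lborel.sigma_finite_measure_axioms
    by (intro pair_sigma_finite.Fubini' pair_sigma_finite.intro) measurable
  also have "\<dots> = (\<integral>\<^sup>+s. (if 0 \<le> s then \<integral>\<^sup>+x\<in>{x \<in> space M. ennreal s < G x}. v x \<partial>M else 0) \<partial>lborel)"
    by (intro nn_integral_cong) (auto intro!: nn_integral_cong simp: indicator_def)
  finally show ?thesis .
qed

lemma nn_integral_eq_survival:
  assumes "sigma_finite_measure M" and [measurable]: "G \<in> borel_measurable M"
  shows "(\<integral>\<^sup>+x. G x \<partial>M) = (\<integral>\<^sup>+s. (if 0 \<le> s then survival M G (ennreal s) else 0) \<partial>lborel)"
proof -
  have "{x \<in> space M. ennreal s < G x} \<in> sets M" for s by measurable
  with nn_integral_layer_cake[OF assms(1), of "\<lambda>_. 1" G] show ?thesis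
    by (simp add: survival_def cong: if_cong)
qed

lemma nn_integral_eq_if_survival_eq:
  assumes "sigma_finite_measure M" "F \<in> borel_measurable M"
    and "sigma_finite_measure N" "G \<in> borel_measurable N"
    and "\<And>s. 0 \<le> s \<Longrightarrow> survival M F (ennreal s) = survival N G (ennreal s)"
  shows "(\<integral>\<^sup>+x. F x \<partial>M) = (\<integral>\<^sup>+x. G x \<partial>N)"
  using assms by (simp add: nn_integral_eq_survival cong: if_cong)

lemma survival_dec_rearr:
  assumes "Y \<in> borel_measurable Omega"
  shows "survival Omega (dec_rearr Y) l = survival Omega Y l"
  using assms
  by (simp add: survival_def[of Omega "dec_rearr Y"] less_dec_rearr_iff emeasure_Omega_ennreal_less
      survival_Omega_le_1)

lemma nn_integral_dec_rearr:
  assumes "Y \<in> borel_measurable Omega"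
  shows "(\<integral>\<^sup>+w. dec_rearr Y w \<partial>Omega) = (\<integral>\<^sup>+x. Y x \<partial>Omega)"
  using assms Omega.sigma_finite_measure_axioms
  by (intro nn_integral_eq_if_survival_eq) (auto simp: survival_dec_rearr borel_measurable_dec_rearr)

lemma ennreal_less_e2ennreal_iff: "0 \<le> s \<Longrightarrow> ennreal s < e2ennreal z \<longleftrightarrow> ereal s < z"
  by (cases z) (auto simp: ennreal_less_iff e2ennreal_neg)

lemma nn_integral_dec_rearr_minus_excess:
  assumes X[measurable]: "X \<in> borel_measurable Omega"
  shows "(\<integral>\<^sup>+w. e2ennreal (dec_rearr_minus X w - ereal c) \<partial>Omega) = (\<integral>\<^sup>+x. ennreal (X x - c) \<partial>Omega)"
proof (rule nn_integral_eq_if_survival_eq)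
  show "(\<lambda>w. e2ennreal (dec_rearr_minus X w - ereal c)) \<in> borel_measurable Omega"
    using borel_measurable_dec_rearr_minus[OF X] by measurable
  fix s :: real assume "0 \<le> s"
  then have "{w \<in> space Omega. ennreal s < e2ennreal (dec_rearr_minus X w - ereal c)}
      = {w \<in> space Omega. ennreal w < survival Omega X (s + c)}"
    by (simp add: ennreal_less_e2ennreal_iff ereal_less_minus ereal_less_dec_rearr_minus_iff[OF X])
  moreover have "{x \<in> space Omega. ennreal s < ennreal (X x - c)} = {x \<in> space Omega. s + c < X x}"
    using \<open>0 \<le> s\<close> by (auto simp: ennreal_less_iff)
  ultimately show "survival Omega (\<lambda>w. e2ennreal (dec_rearr_minus X w - ereal c)) (ennreal s)
      = survival Omega (\<lambda>x. ennreal (X x - c)) (ennreal s)"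
    by (simp add: survival_def emeasure_Omega_ennreal_less Omega.emeasure_le_1)
qed (use Omega.sigma_finite_measure_axioms in auto)

section \<open>The Hardy--Littlewood inequality for quantile functions\<close>

text \<open>The bound tau ranges over ennreal because it is instantiated with values of survival
  functions.\<close>

definition integral_upto :: "ennreal \<Rightarrow> (real \<Rightarrow> ennreal) \<Rightarrow> ennreal" where
  "integral_upto \<tau> H = (\<integral>\<^sup>+w\<in>{w \<in> space Omega. ennreal w < \<tau>}. H w \<partial>Omega)"

lemma integral_upto_const: "\<tau> \<le> 1 \<Longrightarrow> integral_upto \<tau> (\<lambda>_. k) = k * \<tau>"
  unfolding integral_upto_def by (simp add: nn_integral_cmult_indicator emeasure_Omega_ennreal_less)

lemma integral_upto_add:
  assumes "F \<in> borel_measurable Omega" "G \<in> borel_measurable Omega"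
  shows "integral_upto \<tau> (\<lambda>w. F w + G w) = integral_upto \<tau> F + integral_upto \<tau> G"
  unfolding integral_upto_def using assms
  by (subst nn_integral_add[symmetric]) (auto simp: distrib_right)

lemma nn_integral_indicator_upto_add:
  assumes "F \<in> borel_measurable Omega" "G \<in> borel_measurable Omega"
  shows "(\<integral>\<^sup>+w. F w * indicator {w \<in> space Omega. ennreal w < \<tau>} w + G w \<partial>Omega)
       = integral_upto \<tau> F + (\<integral>\<^sup>+w. G w \<partial>Omega)"
  unfolding integral_upto_def using assms by (intro nn_integral_add) auto

lemma ennreal_eq_ennreal_max_0: "ennreal x = ennreal (max x 0)"
  by (cases "0 \<le> x") (auto simp: ennreal_neg max_def)

lemma ennreal_add_eq_ennreal_max: "ennreal x + ennreal y = ennreal (max x 0 + max y 0)"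
  by (subst (1 2) ennreal_eq_ennreal_max_0) (simp add: ennreal_plus)

lemma e2ennreal_le_add_excess:
  assumes "0 \<le> c"
  shows "e2ennreal h \<le> ennreal c + e2ennreal (h - ereal c)"
proof (cases h)
  case (real r)
  have "ennreal r \<le> ennreal (max c 0 + max (r - c) 0)"
    by (rule ennreal_leI) linarith
  moreover have "h - ereal c = ereal (r - c)" using real by simp
  ultimately show ?thesis using real by (simp only: ennreal_add_eq_ennreal_max e2ennreal_ereal)
qed (auto simp: e2ennreal_neg)

lemma e2ennreal_eq_add_excess:
  assumes "0 \<le> c" "ereal c \<le> h \<or> c = 0"
  shows "e2ennreal h = ennreal c + e2ennreal (h - ereal c)"
proof (cases h)
  case (real r)
  have "max r 0 = max c 0 + max (r - c) 0" using assms real by (auto simp: max_def)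
  then have "ennreal r = ennreal (max c 0 + max (r - c) 0)"
    using ennreal_eq_ennreal_max_0[of r] by simp
  moreover have "h - ereal c = ereal (r - c)" using real by simp
  ultimately show ?thesis using real by (simp only: ennreal_add_eq_ennreal_max e2ennreal_ereal)
qed (use assms in \<open>auto simp: e2ennreal_neg\<close>)

lemma e2ennreal_excess_eq_0: "h \<le> ereal c \<Longrightarrow> e2ennreal (h - ereal c) = 0"
  by (rule e2ennreal_neg) (cases h; simp)

lemma e2ennreal_add_le_excess:
  "e2ennreal h + ennreal (- c) \<le> e2ennreal (- h) + ennreal c + e2ennreal (h - ereal c)"
proof (cases h)
  case (real r)
  have "ennreal (max r 0 + max (- c) 0) \<le> ennreal (max (max (- r) 0 + max c 0) 0 + max (r - c) 0)"
    by (rule ennreal_leI) (auto simp: max_def)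
  moreover have "h - ereal c = ereal (r - c)" "- h = ereal (- r)" using real by simp_all
  ultimately show ?thesis using real by (simp only: ennreal_add_eq_ennreal_max e2ennreal_ereal)
qed auto

lemma e2ennreal_add_eq_excess:
  assumes "ereal c \<le> h"
  shows "e2ennreal h + ennreal (- c) = e2ennreal (- h) + ennreal c + e2ennreal (h - ereal c)"
proof (cases h)
  case (real r)
  have "max r 0 + max (- c) 0 = max (max (- r) 0 + max c 0) 0 + max (r - c) 0"
    using assms real by (auto simp: max_def)
  moreover have "h - ereal c = ereal (r - c)" "- h = ereal (- r)" using real by simp_all
  ultimately show ?thesis using real by (simp only: ennreal_add_eq_ennreal_max e2ennreal_ereal)
qed (use assms in auto)

lemma antimono_segment_bounds:
  assumes "antimono h" "0 \<le> t" "w \<in> space Omega"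
  shows "w \<in> {w \<in> space Omega. ennreal w < ennreal t} \<Longrightarrow> h t \<le> h w"
    and "w \<notin> {w \<in> space Omega. ennreal w < ennreal t} \<Longrightarrow> h w \<le> h t"
  using assms antimonoD[OF assms(1)] by (auto simp: ennreal_less_iff space_Omega not_less)

lemma integral_upto_le_excess:
  assumes [measurable]: "h \<in> borel_measurable Omega" and "0 \<le> c" "\<tau> \<le> 1"
  shows "integral_upto \<tau> (\<lambda>w. e2ennreal (h w)) \<le> ennreal c * \<tau> + (\<integral>\<^sup>+w. e2ennreal (h w - ereal c) \<partial>Omega)"
proof -
  let ?S = "{w \<in> space Omega. ennreal w < \<tau>}"
  have "integral_upto \<tau> (\<lambda>w. e2ennreal (h w))
      \<le> (\<integral>\<^sup>+w. ennreal c * indicator ?S w + e2ennreal (h w - ereal c) \<partial>Omega)"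
    unfolding integral_upto_def
    by (intro nn_integral_mono) (simp add: indicator_def e2ennreal_le_add_excess[OF \<open>0 \<le> c\<close>])
  also have "\<dots> = ennreal c * \<tau> + (\<integral>\<^sup>+w. e2ennreal (h w - ereal c) \<partial>Omega)"
    by (simp add: nn_integral_indicator_upto_add integral_upto_const[OF \<open>\<tau> \<le> 1\<close>])
  finally show ?thesis .
qed

lemma integral_upto_eq_excess:
  assumes [measurable]: "h \<in> borel_measurable Omega" and h: "antimono h" "h t = ereal a"
    and t: "0 \<le> t" "t \<le> 1"
  shows "integral_upto (ennreal t) (\<lambda>w. e2ennreal (h w))
       = ennreal (max a 0) * ennreal t + (\<integral>\<^sup>+w. e2ennreal (h w - ereal (max a 0)) \<partial>Omega)"
proof -
  let ?S = "{w \<in> space Omega. ennreal w < ennreal t}"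
  have "integral_upto (ennreal t) (\<lambda>w. e2ennreal (h w))
      = (\<integral>\<^sup>+w. ennreal (max a 0) * indicator ?S w + e2ennreal (h w - ereal (max a 0)) \<partial>Omega)"
    unfolding integral_upto_def
  proof (rule nn_integral_cong)
    fix w assume w: "w \<in> space Omega"
    show "e2ennreal (h w) * indicator ?S w
        = ennreal (max a 0) * indicator ?S w + e2ennreal (h w - ereal (max a 0))"
    proof (cases "w \<in> ?S")
      case True
      then have "ereal (max a 0) \<le> h w \<or> max a 0 = 0"
        using antimono_segment_bounds(1)[OF h(1) t(1) w] h(2) by (auto simp: max_def)
      then show ?thesis using True e2ennreal_eq_add_excess[of "max a 0" "h w"] by simp
    next
      case False
      then have "h w \<le> ereal (max a 0)"
        using antimono_segment_bounds(2)[OF h(1) t(1) w] h(2) by (auto intro: order_trans)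
      then show ?thesis using False e2ennreal_excess_eq_0[of "h w" "max a 0"] by simp
    qed
  qed
  also have "\<dots> = ennreal (max a 0) * ennreal t + (\<integral>\<^sup>+w. e2ennreal (h w - ereal (max a 0)) \<partial>Omega)"
    using t by (simp add: nn_integral_indicator_upto_add integral_upto_const)
  finally show ?thesis .
qed

lemma integral_upto_add_le_excess:
  assumes [measurable]: "h \<in> borel_measurable Omega" and "\<tau> \<le> 1"
  shows "integral_upto \<tau> (\<lambda>w. e2ennreal (h w)) + ennreal (- c) * \<tau>
       \<le> integral_upto \<tau> (\<lambda>w. e2ennreal (- h w)) + ennreal c * \<tau>
         + (\<integral>\<^sup>+w. e2ennreal (h w - ereal c) \<partial>Omega)"
proof -
  let ?S = "{w \<in> space Omega. ennreal w < \<tau>}"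
  have "integral_upto \<tau> (\<lambda>w. e2ennreal (h w)) + ennreal (- c) * \<tau>
      = integral_upto \<tau> (\<lambda>w. e2ennreal (h w) + ennreal (- c))"
    using \<open>\<tau> \<le> 1\<close> by (simp add: integral_upto_add integral_upto_const)
  also have "\<dots> \<le> (\<integral>\<^sup>+w. (e2ennreal (- h w) + ennreal c) * indicator ?S w
                          + e2ennreal (h w - ereal c) \<partial>Omega)"
    unfolding integral_upto_def
    by (intro nn_integral_mono)
       (simp add: indicator_def add.assoc e2ennreal_add_le_excess[simplified add.assoc])
  also have "\<dots> = integral_upto \<tau> (\<lambda>w. e2ennreal (- h w)) + ennreal c * \<tau>
                  + (\<integral>\<^sup>+w. e2ennreal (h w - ereal c) \<partial>Omega)"
    using \<open>\<tau> \<le> 1\<close> by (simp add: nn_integral_indicator_upto_add integral_upto_add integral_upto_const)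
  finally show ?thesis .
qed

lemma integral_upto_add_eq_excess:
  assumes [measurable]: "h \<in> borel_measurable Omega" and h: "antimono h" "h t = ereal a"
    and t: "0 \<le> t" "t \<le> 1"
  shows "integral_upto (ennreal t) (\<lambda>w. e2ennreal (h w)) + ennreal (- a) * ennreal t
       = integral_upto (ennreal t) (\<lambda>w. e2ennreal (- h w)) + ennreal a * ennreal t
         + (\<integral>\<^sup>+w. e2ennreal (h w - ereal a) \<partial>Omega)"
proof -
  let ?S = "{w \<in> space Omega. ennreal w < ennreal t}"
  have "integral_upto (ennreal t) (\<lambda>w. e2ennreal (h w)) + ennreal (- a) * ennreal t
      = integral_upto (ennreal t) (\<lambda>w. e2ennreal (h w) + ennreal (- a))"
    using t by (simp add: integral_upto_add integral_upto_const)
  also have "\<dots> = (\<integral>\<^sup>+w. (e2ennreal (- h w) + ennreal a) * indicator ?S w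
                          + e2ennreal (h w - ereal a) \<partial>Omega)"
    unfolding integral_upto_def
  proof (rule nn_integral_cong)
    fix w assume w: "w \<in> space Omega"
    show "(e2ennreal (h w) + ennreal (- a)) * indicator ?S w
        = (e2ennreal (- h w) + ennreal a) * indicator ?S w + e2ennreal (h w - ereal a)"
    proof (cases "w \<in> ?S")
      case True
      then have "ereal a \<le> h w" using antimono_segment_bounds(1)[OF h(1) t(1) w] h(2) by simp
      then show ?thesis using True e2ennreal_add_eq_excess[of a "h w"] by (simp add: add.assoc)
    next
      case False
      then have "h w \<le> ereal a" using antimono_segment_bounds(2)[OF h(1) t(1) w] h(2) by simp
      then show ?thesis using False by (simp add: e2ennreal_excess_eq_0)
    qed
  qed
  also have "\<dots> = integral_upto (ennreal t) (\<lambda>w. e2ennreal (- h w)) + ennreal a * ennreal t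
                  + (\<integral>\<^sup>+w. e2ennreal (h w - ereal a) \<partial>Omega)"
    using t by (simp add: nn_integral_indicator_upto_add integral_upto_add integral_upto_const)
  finally show ?thesis .
qed

lemma nn_integral_excess_add_le:
  assumes "X \<in> borel_measurable M" "Y \<in> borel_measurable M"
  shows "(\<integral>\<^sup>+x. ennreal (X x + Y x - (a + b)) \<partial>M)
       \<le> (\<integral>\<^sup>+x. ennreal (X x - a) \<partial>M) + (\<integral>\<^sup>+x. ennreal (Y x - b) \<partial>M)"
proof -
  have "ennreal (X x + Y x - (a + b)) \<le> ennreal (X x - a) + ennreal (Y x - b)" for x
    unfolding ennreal_add_eq_ennreal_max by (rule ennreal_leI) linarith
  then have "(\<integral>\<^sup>+x. ennreal (X x + Y x - (a + b)) \<partial>M)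
      \<le> (\<integral>\<^sup>+x. ennreal (X x - a) + ennreal (Y x - b) \<partial>M)"
    by (intro nn_integral_mono)
  also have "\<dots> = (\<integral>\<^sup>+x. ennreal (X x - a) \<partial>M) + (\<integral>\<^sup>+x. ennreal (Y x - b) \<partial>M)"
    using assms by (intro nn_integral_add) auto
  finally show ?thesis .
qed

lemma integral_upto_pos_dec_rearr_minus_add_le:
  assumes X[measurable]: "X \<in> borel_measurable Omega" and Y[measurable]: "Y \<in> borel_measurable Omega"
    and t: "0 < t" "t < 1"
  defines "f \<equiv> dec_rearr_minus (\<lambda>x. X x + Y x)" and "p \<equiv> dec_rearr_minus X" and "q \<equiv> dec_rearr_minus Y"
  shows "integral_upto (ennreal t) (\<lambda>w. e2ennreal (f w))
       \<le> integral_upto (ennreal t) (\<lambda>w. e2ennreal (p w) + e2ennreal (q w))"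
proof -
  have f_meas[measurable]: "f \<in> borel_measurable Omega" and p_meas[measurable]: "p \<in> borel_measurable Omega"
    and q_meas[measurable]: "q \<in> borel_measurable Omega"
    unfolding f_def p_def q_def by (simp_all add: borel_measurable_dec_rearr_minus)
  obtain a b where a: "p t = ereal a" and b: "q t = ereal b"
    using dec_rearr_minus_real[OF X t] dec_rearr_minus_real[OF Y t] unfolding p_def q_def by metis
  have anti: "antimono p" "antimono q"
    unfolding p_def q_def by (auto intro: antimonoI dec_rearr_minus_antimono)
  define c where "c = max a 0 + max b 0"
  have "integral_upto (ennreal t) (\<lambda>w. e2ennreal (f w))
      \<le> ennreal c * ennreal t + (\<integral>\<^sup>+x. ennreal (X x + Y x - c) \<partial>Omega)"
    using integral_upto_le_excess[OF f_meas, of c "ennreal t"] t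
      nn_integral_dec_rearr_minus_excess[of "\<lambda>x. X x + Y x" c]
    unfolding c_def f_def by simp
  also have "\<dots> \<le> ennreal c * ennreal t
      + ((\<integral>\<^sup>+x. ennreal (X x - max a 0) \<partial>Omega) + (\<integral>\<^sup>+x. ennreal (Y x - max b 0) \<partial>Omega))"
    unfolding c_def by (intro add_left_mono nn_integral_excess_add_le X Y)
  also have "\<dots> = (ennreal (max a 0) * ennreal t + (\<integral>\<^sup>+x. ennreal (X x - max a 0) \<partial>Omega))
               + (ennreal (max b 0) * ennreal t + (\<integral>\<^sup>+x. ennreal (Y x - max b 0) \<partial>Omega))"
    unfolding c_def by (simp add: ennreal_plus distrib_right distrib_left ac_simps)
  also have "\<dots> = integral_upto (ennreal t) (\<lambda>w. e2ennreal (p w)) + integral_upto (ennreal t) (\<lambda>w. e2ennreal (q w))"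
    using integral_upto_eq_excess[OF p_meas anti(1) a] integral_upto_eq_excess[OF q_meas anti(2) b] t
      nn_integral_dec_rearr_minus_excess[OF X, of "max a 0"]
      nn_integral_dec_rearr_minus_excess[OF Y, of "max b 0"]
    by (simp add: p_def q_def)
  also have "\<dots> = integral_upto (ennreal t) (\<lambda>w. e2ennreal (p w) + e2ennreal (q w))"
    by (intro integral_upto_add[symmetric]) measurable
  finally show ?thesis .
qed

text \<open>Cancellation step of the Hardy-Littlewood argument: ennreal has no subtraction, so
  negative parts and the offsets of the form (-c)^+ t are moved to the other side.\<close>

lemma ennreal_parts_le_of_excess:
  fixes F\<^sub>p F\<^sub>n P\<^sub>p P\<^sub>n Q\<^sub>p Q\<^sub>n E E\<^sub>P E\<^sub>Q m\<^sub>F m\<^sub>P m\<^sub>Q n\<^sub>F n\<^sub>P n\<^sub>Q :: ennreal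
  assumes F: "F\<^sub>p + m\<^sub>F \<le> F\<^sub>n + n\<^sub>F + E" and E: "E \<le> E\<^sub>P + E\<^sub>Q"
    and P: "P\<^sub>p + m\<^sub>P = P\<^sub>n + n\<^sub>P + E\<^sub>P" and Q: "Q\<^sub>p + m\<^sub>Q = Q\<^sub>n + n\<^sub>Q + E\<^sub>Q"
    and balance: "m\<^sub>F + n\<^sub>P + n\<^sub>Q = n\<^sub>F + m\<^sub>P + m\<^sub>Q"
    and finite: "m\<^sub>F \<noteq> \<infinity>" "m\<^sub>P \<noteq> \<infinity>" "m\<^sub>Q \<noteq> \<infinity>" "n\<^sub>P \<noteq> \<infinity>" "n\<^sub>Q \<noteq> \<infinity>"
  shows "F\<^sub>p + P\<^sub>n + Q\<^sub>n \<le> P\<^sub>p + Q\<^sub>p + F\<^sub>n"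
proof (cases "P\<^sub>p = \<infinity> \<or> Q\<^sub>p = \<infinity>")
  case False
  have "E\<^sub>P \<le> P\<^sub>p + m\<^sub>P" "E\<^sub>Q \<le> Q\<^sub>p + m\<^sub>Q"
    unfolding P Q by (simp_all add: add.commute)
  then have "E\<^sub>P \<noteq> \<infinity>" "E\<^sub>Q \<noteq> \<infinity>" using False finite by (auto simp: top_unique)
  define Z where "Z = E\<^sub>P + E\<^sub>Q + m\<^sub>F + n\<^sub>P + n\<^sub>Q"
  have "Z \<noteq> \<infinity>" using \<open>E\<^sub>P \<noteq> \<infinity>\<close> \<open>E\<^sub>Q \<noteq> \<infinity>\<close> finite by (simp add: Z_def)
  have "Z + (F\<^sub>p + P\<^sub>n + Q\<^sub>n) = (F\<^sub>p + m\<^sub>F) + (P\<^sub>n + n\<^sub>P + E\<^sub>P) + (Q\<^sub>n + n\<^sub>Q + E\<^sub>Q)"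
    by (simp add: Z_def ac_simps)
  also have "\<dots> \<le> (F\<^sub>n + n\<^sub>F + (E\<^sub>P + E\<^sub>Q)) + (P\<^sub>p + m\<^sub>P) + (Q\<^sub>p + m\<^sub>Q)"
    unfolding P[symmetric] Q[symmetric] using F E by (intro add_right_mono) (meson add_left_mono order_trans)
  also have "\<dots> = Z + (P\<^sub>p + Q\<^sub>p + F\<^sub>n)"
    using balance by (simp add: Z_def ac_simps)
  finally show ?thesis using \<open>Z \<noteq> \<infinity>\<close> by (simp add: ennreal_add_left_cancel_le)
qed auto

lemma ennreal_neg_add_balance:
  "ennreal (- (a + b)) + ennreal a + ennreal b = ennreal (a + b) + ennreal (- a) + ennreal (- b)"
proof -
  have "max (- (a + b)) 0 + max a 0 + max b 0 = max (a + b) 0 + max (- a) 0 + max (- b) 0"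
    by (auto simp: max_def)
  then show ?thesis
    by (simp only: ennreal_add_eq_ennreal_max max.absorb1 add_nonneg_nonneg max.cobounded2)
qed

lemma integral_upto_dec_rearr_minus_add_le:
  assumes X[measurable]: "X \<in> borel_measurable Omega" and Y[measurable]: "Y \<in> borel_measurable Omega"
    and t: "0 < t" "t < 1"
  defines "f \<equiv> dec_rearr_minus (\<lambda>x. X x + Y x)" and "p \<equiv> dec_rearr_minus X" and "q \<equiv> dec_rearr_minus Y"
  shows "integral_upto (ennreal t) (\<lambda>w. e2ennreal (f w) + e2ennreal (- p w) + e2ennreal (- q w))
       \<le> integral_upto (ennreal t) (\<lambda>w. e2ennreal (p w) + e2ennreal (q w) + e2ennreal (- f w))"
proof -
  have f_meas[measurable]: "f \<in> borel_measurable Omega" and p_meas[measurable]: "p \<in> borel_measurable Omega"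
    and q_meas[measurable]: "q \<in> borel_measurable Omega"
    unfolding f_def p_def q_def by (simp_all add: borel_measurable_dec_rearr_minus)
  obtain a b where a: "p t = ereal a" and b: "q t = ereal b"
    using dec_rearr_minus_real[OF X t] dec_rearr_minus_real[OF Y t] unfolding p_def q_def by metis
  have anti: "antimono p" "antimono q"
    unfolding p_def q_def by (auto intro: antimonoI dec_rearr_minus_antimono)
  let ?I = "\<lambda>h. integral_upto (ennreal t) h"
  have excess_F: "?I (\<lambda>w. e2ennreal (f w)) + ennreal (- (a + b)) * ennreal t
      \<le> ?I (\<lambda>w. e2ennreal (- f w)) + ennreal (a + b) * ennreal t
        + (\<integral>\<^sup>+x. ennreal (X x + Y x - (a + b)) \<partial>Omega)"
    using integral_upto_add_le_excess[OF f_meas, of "ennreal t" "a + b"] t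
      nn_integral_dec_rearr_minus_excess[of "\<lambda>x. X x + Y x" "a + b"]
    unfolding f_def by simp
  have excess_P: "?I (\<lambda>w. e2ennreal (p w)) + ennreal (- a) * ennreal t
      = ?I (\<lambda>w. e2ennreal (- p w)) + ennreal a * ennreal t + (\<integral>\<^sup>+x. ennreal (X x - a) \<partial>Omega)"
    using integral_upto_add_eq_excess[OF p_meas anti(1) a] t nn_integral_dec_rearr_minus_excess[OF X, of a]
    unfolding p_def by simp
  have excess_Q: "?I (\<lambda>w. e2ennreal (q w)) + ennreal (- b) * ennreal t
      = ?I (\<lambda>w. e2ennreal (- q w)) + ennreal b * ennreal t + (\<integral>\<^sup>+x. ennreal (Y x - b) \<partial>Omega)"
    using integral_upto_add_eq_excess[OF q_meas anti(2) b] t nn_integral_dec_rearr_minus_excess[OF Y, of b]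
    unfolding q_def by simp
  have balance: "ennreal (- (a + b)) * ennreal t + ennreal a * ennreal t + ennreal b * ennreal t
      = ennreal (a + b) * ennreal t + ennreal (- a) * ennreal t + ennreal (- b) * ennreal t"
    unfolding distrib_right[symmetric] ennreal_neg_add_balance ..
  have "?I (\<lambda>w. e2ennreal (f w)) + ?I (\<lambda>w. e2ennreal (- p w)) + ?I (\<lambda>w. e2ennreal (- q w))
      \<le> ?I (\<lambda>w. e2ennreal (p w)) + ?I (\<lambda>w. e2ennreal (q w)) + ?I (\<lambda>w. e2ennreal (- f w))"
    by (rule ennreal_parts_le_of_excess[OF excess_F nn_integral_excess_add_le[OF X Y] excess_P excess_Q
          balance]) (simp_all add: ennreal_mult_eq_top_iff)
  then show ?thesis by (simp add: integral_upto_add)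
qed

lemma integral_upto_eq_emeasure_density:
  "H \<in> borel_measurable Omega \<Longrightarrow> integral_upto \<tau> H = emeasure (density Omega H) {w \<in> space Omega. ennreal w < \<tau>}"
  by (simp add: integral_upto_def emeasure_density)

lemma integral_upto_1_eq_SUP:
  assumes [measurable]: "H \<in> borel_measurable Omega"
  defines "t \<equiv> \<lambda>n::nat. 1 - inverse (real (Suc (Suc n)))"
  shows "integral_upto 1 H = (SUP n. integral_upto (ennreal (t n)) H)"
proof -
  let ?A = "\<lambda>n. {w \<in> space Omega. ennreal w < ennreal (t n)}"
  have "incseq t"
    unfolding t_def by (intro incseq_SucI) (simp add: field_simps)
  then have "incseq ?A"
    by (auto simp: incseq_def intro: less_le_trans ennreal_leI)
  moreover have "(\<Union>n. ?A n) = {w \<in> space Omega. ennreal w < 1}"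
  proof safe
    fix w assume w: "w \<in> space Omega" "ennreal w < 1"
    then have "0 < 1 - w" by (simp add: space_Omega ennreal_less_iff)
    then obtain n where "inverse (real (Suc n)) < 1 - w" using reals_Archimedean by blast
    moreover have "inverse (real (Suc (Suc n))) \<le> inverse (real (Suc n))" by (simp add: field_simps)
    ultimately have "w < t n" unfolding t_def by linarith
    with w show "w \<in> (\<Union>n. ?A n)" by (auto simp: space_Omega ennreal_less_iff)
  next
    fix w n assume "w \<in> space Omega" "ennreal w < ennreal (t n)"
    moreover have "t n < 1" unfolding t_def by simp
    ultimately show "ennreal w < 1" by (metis ennreal_lessI less_trans ennreal_1 zero_less_one)
  qed
  moreover have "range ?A \<subseteq> sets Omega" by auto
  ultimately show ?thesis
    using SUP_emeasure_incseq[of ?A "density Omega H"]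
    by (simp add: integral_upto_eq_emeasure_density)
qed

lemma integral_upto_le_extend:
  assumes "H1 \<in> borel_measurable Omega" "H2 \<in> borel_measurable Omega"
    and le: "\<And>t. 0 < t \<Longrightarrow> t < 1 \<Longrightarrow> integral_upto (ennreal t) H1 \<le> integral_upto (ennreal t) H2"
    and "\<tau> \<le> 1"
  shows "integral_upto \<tau> H1 \<le> integral_upto \<tau> H2"
proof -
  consider "\<tau> = 0" | t where "\<tau> = ennreal t" "0 < t" "t < 1" | "\<tau> = 1"
    using \<open>\<tau> \<le> 1\<close> by (cases \<tau>) (auto simp: le_less ennreal_less_iff top_unique)
  then show ?thesis
  proof cases
    case 1
    then show ?thesis by (simp add: integral_upto_def)
  next
    case 2
    then show ?thesis using le by simp
  next
    case 3
    have "0 < 1 - inverse (real (Suc (Suc n)))" "1 - inverse (real (Suc (Suc n))) < 1" for n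
      by (simp_all add: field_simps)
    then show ?thesis
      using 3 by (simp add: integral_upto_1_eq_SUP assms(1,2) SUP_mono' le)
  qed
qed

lemma nn_integral_mult_dec_rearr:
  assumes Z: "Z \<in> borel_measurable Omega" and [measurable]: "H \<in> borel_measurable Omega"
  shows "(\<integral>\<^sup>+w. H w * dec_rearr Z w \<partial>Omega)
       = (\<integral>\<^sup>+s. (if 0 \<le> s then integral_upto (survival Omega Z (ennreal s)) H else 0) \<partial>lborel)"
  using nn_integral_layer_cake[OF Omega.sigma_finite_measure_axioms _ borel_measurable_dec_rearr[OF Z]]
  by (simp add: integral_upto_def less_dec_rearr_iff[OF Z] cong: if_cong)

lemma nn_integral_mult_dec_rearr_mono:
  assumes Z: "Z \<in> borel_measurable Omega"
    and "H1 \<in> borel_measurable Omega" "H2 \<in> borel_measurable Omega"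
    and "\<And>t. 0 < t \<Longrightarrow> t < 1 \<Longrightarrow> integral_upto (ennreal t) H1 \<le> integral_upto (ennreal t) H2"
  shows "(\<integral>\<^sup>+w. H1 w * dec_rearr Z w \<partial>Omega) \<le> (\<integral>\<^sup>+w. H2 w * dec_rearr Z w \<partial>Omega)"
  unfolding nn_integral_mult_dec_rearr[OF Z assms(2)] nn_integral_mult_dec_rearr[OF Z assms(3)]
proof (rule nn_integral_mono)
  fix s :: real
  show "(if 0 \<le> s then integral_upto (survival Omega Z (ennreal s)) H1 else 0)
      \<le> (if 0 \<le> s then integral_upto (survival Omega Z (ennreal s)) H2 else 0)"
    using integral_upto_le_extend[OF assms(2-4) survival_Omega_le_1[of Z "ennreal s"]] by simp
qed

section \<open>The functional R^-\<close>

lemma e2ennreal_mult_enn2ereal: "e2ennreal (x * enn2ereal g) = e2ennreal x * g"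
proof (cases g)
  case (real r)
  then show ?thesis
    by (cases x) (auto simp: e2ennreal_neg ennreal_mult'' ennreal_mult_top zero_le_mult_iff
                       mult_le_0_iff ennreal_mult less_le ennreal_mult_eq_top_iff)
next
  case top
  then show ?thesis
    by (cases x) (auto simp: e2ennreal_neg ennreal_top_mult not_le ennreal_mult_top ennreal_neg)
qed

lemma Eint_mult_eq:
  "Eint (\<lambda>w. h w * enn2ereal (G w))
   = enn2ereal (\<integral>\<^sup>+w. e2ennreal (h w) * G w \<partial>Omega) - enn2ereal (\<integral>\<^sup>+w. e2ennreal (- h w) * G w \<partial>Omega)"
  using e2ennreal_mult_enn2ereal[of "- h w" "G w" for w]
  by (simp add: Eint_def e2ennreal_mult_enn2ereal)

text \<open>The first hypothesis excludes infinity - infinity = infinity on the left.\<close>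

lemma enn2ereal_diff_le_add_diff:
  fixes A\<^sub>f B\<^sub>f A\<^sub>p B\<^sub>p A\<^sub>q B\<^sub>q :: ennreal
  assumes pos: "A\<^sub>f \<le> A\<^sub>p + A\<^sub>q" and parts: "A\<^sub>f + B\<^sub>p + B\<^sub>q \<le> A\<^sub>p + A\<^sub>q + B\<^sub>f"
  shows "enn2ereal A\<^sub>f - enn2ereal B\<^sub>f \<le> (enn2ereal A\<^sub>p - enn2ereal B\<^sub>p) + (enn2ereal A\<^sub>q - enn2ereal B\<^sub>q)"
proof (cases "A\<^sub>p = top \<or> A\<^sub>q = top")
  case True
  then show ?thesis
    by (cases "enn2ereal B\<^sub>p"; cases "enn2ereal B\<^sub>q"; cases "enn2ereal A\<^sub>p"; cases "enn2ereal A\<^sub>q") auto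
next
  case False
  then have "A\<^sub>p + A\<^sub>q \<noteq> top" by simp
  with pos have "A\<^sub>f \<noteq> top" by (metis top.extremum_unique)
  show ?thesis
  proof (cases "B\<^sub>f = top")
    case True
    then show ?thesis using \<open>A\<^sub>f \<noteq> top\<close> by (cases A\<^sub>f) auto
  next
    case False
    with \<open>A\<^sub>p + A\<^sub>q \<noteq> top\<close> parts have "A\<^sub>f + B\<^sub>p + B\<^sub>q \<noteq> top"
      by (metis ennreal_add_eq_top top.extremum_unique)
    then obtain bp bq where "B\<^sub>p = ennreal bp" "0 \<le> bp" "B\<^sub>q = ennreal bq" "0 \<le> bq"
      by (cases B\<^sub>p; cases B\<^sub>q) auto
    moreover obtain af bf where "A\<^sub>f = ennreal af" "0 \<le> af" "B\<^sub>f = ennreal bf" "0 \<le> bf"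
      using \<open>A\<^sub>f \<noteq> top\<close> False by (cases A\<^sub>f; cases B\<^sub>f) auto
    moreover obtain ap aq where "A\<^sub>p = ennreal ap" "0 \<le> ap" "A\<^sub>q = ennreal aq" "0 \<le> aq"
      using \<open>\<not> (A\<^sub>p = top \<or> A\<^sub>q = top)\<close> by (cases A\<^sub>p; cases A\<^sub>q) auto
    ultimately show ?thesis using parts by (simp add: ennreal_plus[symmetric] del: ennreal_plus)
  qed
qed

lemma Eint_dec_rearr_minus_add_le:
  assumes X[measurable]: "X \<in> borel_measurable Omega" and Y[measurable]: "Y \<in> borel_measurable Omega"
    and Z: "Z \<in> borel_measurable Omega"
  shows "Eint (\<lambda>w. dec_rearr_minus (\<lambda>x. X x + Y x) w * enn2ereal (dec_rearr Z w))
       \<le> Eint (\<lambda>w. dec_rearr_minus X w * enn2ereal (dec_rearr Z w))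
         + Eint (\<lambda>w. dec_rearr_minus Y w * enn2ereal (dec_rearr Z w))"
proof -
  define f p q G where "f = dec_rearr_minus (\<lambda>x. X x + Y x)" and "p = dec_rearr_minus X"
    and "q = dec_rearr_minus Y" and "G = dec_rearr Z"
  have [measurable]: "f \<in> borel_measurable Omega" "p \<in> borel_measurable Omega"
    "q \<in> borel_measurable Omega" "G \<in> borel_measurable Omega"
    unfolding f_def p_def q_def G_def using Z by (simp_all add: borel_measurable_dec_rearr_minus
      borel_measurable_dec_rearr)
  let ?A = "\<lambda>h. \<integral>\<^sup>+w. e2ennreal (h w) * G w \<partial>Omega"
  let ?B = "\<lambda>h. \<integral>\<^sup>+w. e2ennreal (- h w) * G w \<partial>Omega"
  have "?A f \<le> (\<integral>\<^sup>+w. (e2ennreal (p w) + e2ennreal (q w)) * G w \<partial>Omega)"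
    unfolding G_def
    by (rule nn_integral_mult_dec_rearr_mono[OF Z], measurable, measurable)
       (rule integral_upto_pos_dec_rearr_minus_add_le[OF X Y, folded f_def p_def q_def])
  also have "\<dots> = ?A p + ?A q"
    by (simp add: distrib_right nn_integral_add)
  finally have pos: "?A f \<le> ?A p + ?A q" .
  have "?A f + ?B p + ?B q
      = (\<integral>\<^sup>+w. (e2ennreal (f w) + e2ennreal (- p w) + e2ennreal (- q w)) * G w \<partial>Omega)"
    by (simp add: distrib_right nn_integral_add)
  also have "\<dots> \<le> (\<integral>\<^sup>+w. (e2ennreal (p w) + e2ennreal (q w) + e2ennreal (- f w)) * G w \<partial>Omega)"
    unfolding G_def
    by (rule nn_integral_mult_dec_rearr_mono[OF Z], measurable, measurable)
       (rule integral_upto_dec_rearr_minus_add_le[OF X Y, folded f_def p_def q_def])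
  also have "\<dots> = ?A p + ?A q + ?B f"
    by (simp add: distrib_right nn_integral_add)
  finally have parts: "?A f + ?B p + ?B q \<le> ?A p + ?A q + ?B f" .
  show ?thesis
    unfolding Eint_mult_eq f_def[symmetric] p_def[symmetric] q_def[symmetric] G_def[symmetric]
    by (rule enn2ereal_diff_le_add_diff[OF pos parts])
qed

lemma Eint_mono:
  assumes "\<And>w. h\<^sub>1 w \<le> h\<^sub>2 w"
  shows "Eint (\<lambda>w. h\<^sub>1 w * enn2ereal (G w)) \<le> Eint (\<lambda>w. h\<^sub>2 w * enn2ereal (G w))"
  unfolding Eint_mult_eq
proof (rule ereal_minus_mono)
  show "enn2ereal (\<integral>\<^sup>+w. e2ennreal (h\<^sub>1 w) * G w \<partial>Omega) \<le> enn2ereal (\<integral>\<^sup>+w. e2ennreal (h\<^sub>2 w) * G w \<partial>Omega)"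
    using assms by (simp add: less_eq_ennreal.rep_eq[symmetric] nn_integral_mono mult_right_mono e2ennreal_mono)
  show "enn2ereal (\<integral>\<^sup>+w. e2ennreal (- h\<^sub>2 w) * G w \<partial>Omega) \<le> enn2ereal (\<integral>\<^sup>+w. e2ennreal (- h\<^sub>1 w) * G w \<partial>Omega)"
    using assms by (simp add: less_eq_ennreal.rep_eq[symmetric] nn_integral_mono mult_right_mono e2ennreal_mono)
qed

lemma Eint_cmult:
  assumes a: "0 < a" and [measurable]: "h \<in> borel_measurable Omega" "G \<in> borel_measurable Omega"
  shows "Eint (\<lambda>w. (ereal a * h w) * enn2ereal (G w)) = ereal a * Eint (\<lambda>w. h w * enn2ereal (G w))"
proof -
  have e2ennreal_cmult: "e2ennreal (ereal a * z) = ennreal a * e2ennreal z" for z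
    using a by (cases z) (auto simp: ennreal_mult' e2ennreal_neg mult_le_0_iff ennreal_mult_top)
  have "ereal a * x - ereal a * y = ereal a * (x - y)" for x y
    using a by (cases x; cases y) (auto simp: algebra_simps)
  then show ?thesis
    using e2ennreal_cmult[of "h w" for w] e2ennreal_cmult[of "- h w" for w] a
    unfolding Eint_mult_eq
    by (simp add: mult.assoc nn_integral_cmult times_ennreal.rep_eq)
qed

lemma enn2ereal_SUP:
  fixes F :: "'a \<Rightarrow> ennreal"
  assumes "I \<noteq> {}"
  shows "enn2ereal (SUP i\<in>I. F i) = (SUP i\<in>I. enn2ereal (F i))"
proof -
  obtain i where "i \<in> I" using assms by blast
  then have "0 \<le> (SUP i\<in>I. enn2ereal (F i))" by (rule SUP_upper2) simp
  then show ?thesis by (simp add: Sup_ennreal.rep_eq image_image max.absorb2)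
qed

lemma SUP_ereal_cmult:
  fixes F :: "'a \<Rightarrow> ereal"
  assumes c: "0 < c"
  shows "(SUP i\<in>I. ereal c * F i) = ereal c * (SUP i\<in>I. F i)"
proof (rule antisym)
  show "(SUP i\<in>I. ereal c * F i) \<le> ereal c * (SUP i\<in>I. F i)"
    by (rule SUP_least) (use c in \<open>auto intro!: ereal_mult_left_mono SUP_upper\<close>)
  have "(SUP i\<in>I. F i) \<le> ereal (1 / c) * (SUP i\<in>I. ereal c * F i)"
  proof (rule SUP_least)
    fix i assume "i \<in> I"
    then have "ereal c * F i \<le> (SUP i\<in>I. ereal c * F i)" by (rule SUP_upper)
    then have "ereal (1 / c) * (ereal c * F i) \<le> ereal (1 / c) * (SUP i\<in>I. ereal c * F i)"
      using c by (intro ereal_mult_left_mono) auto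
    moreover have "ereal (1 / c) * (ereal c * F i) = F i"
      using c by (cases "F i") auto
    ultimately show "F i \<le> ereal (1 / c) * (SUP i\<in>I. ereal c * F i)" by simp
  qed
  then have "ereal c * (SUP i\<in>I. F i) \<le> ereal c * (ereal (1 / c) * (SUP i\<in>I. ereal c * F i))"
    using c by (intro ereal_mult_left_mono) auto
  moreover have "ereal c * (ereal (1 / c) * x) = x" for x
    using c by (cases x) auto
  ultimately show "ereal c * (SUP i\<in>I. F i) \<le> (SUP i\<in>I. ereal c * F i)"
    by simp
qed

lemma Dset_measurable: "Y \<in> Dset R \<Longrightarrow> Y \<in> borel_measurable Omega"
  by (simp add: Dset_def Mplus_def)

lemma Eint_dec_rearr_minus_const:
  assumes Y: "Y \<in> Dset R"
  shows "Eint (\<lambda>w. dec_rearr_minus (\<lambda>_. c) w * enn2ereal (dec_rearr Y w)) = ereal c"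
proof -
  have int1: "(\<integral>\<^sup>+w. dec_rearr Y w \<partial>Omega) = 1"
    using Y nn_integral_dec_rearr[OF Dset_measurable[OF Y]] by (simp add: Dset_def)
  have cong: "(\<integral>\<^sup>+w. e2ennreal (d * dec_rearr_minus (\<lambda>_. c) w) * dec_rearr Y w \<partial>Omega)
      = (\<integral>\<^sup>+w. e2ennreal (d * ereal c) * dec_rearr Y w \<partial>Omega)" for d
    by (rule nn_integral_cong_AE) (use AE_Omega_less_1 in \<open>eventually_elim, simp add: dec_rearr_minus_const\<close>)
  have "dec_rearr Y \<in> borel_measurable Omega"
    using Y by (simp add: Dset_measurable borel_measurable_dec_rearr)
  then show ?thesis
    using int1 cong[of 1] cong[of "-1"] unfolding Eint_mult_eq
    by (cases "0 \<le> c") (auto simp: nn_integral_cmult ennreal_neg zero_ennreal.rep_eq)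
qed

lemma Dset_nonempty:
  assumes "ri_function_norm R"
    and "\<forall>X\<in>Mplus. R X = (SUP Y \<in> Dset R. \<integral>\<^sup>+ w. dec_rearr X w * dec_rearr Y w \<partial>Omega)"
  shows "Dset R \<noteq> {}"
proof
  assume "Dset R = {}"
  moreover have "indicator (space Omega) \<in> Mplus" by (simp add: Mplus_def)
  ultimately have "R (indicator (space Omega)) = 0" using assms(2) by (simp add: bot_ennreal)
  moreover have "R (indicator (space Omega)) = 1" using assms(1) by (simp add: ri_function_norm_def)
  ultimately show False by simp
qed

lemma Rminus_const: "Dset R \<noteq> {} \<Longrightarrow> Rminus R (\<lambda>_. c) = ereal c"
  by (simp add: Rminus_def Eint_dec_rearr_minus_const)

lemma Rminus_add_le:
  assumes "X \<in> borel_measurable Omega" "Y \<in> borel_measurable Omega"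
  shows "Rminus R (\<lambda>x. X x + Y x) \<le> Rminus R X + Rminus R Y"
  unfolding Rminus_def
proof (rule SUP_least)
  fix Z assume Z: "Z \<in> Dset R"
  have "Eint (\<lambda>w. dec_rearr_minus (\<lambda>x. X x + Y x) w * enn2ereal (dec_rearr Z w))
      \<le> Eint (\<lambda>w. dec_rearr_minus X w * enn2ereal (dec_rearr Z w))
         + Eint (\<lambda>w. dec_rearr_minus Y w * enn2ereal (dec_rearr Z w))"
    using assms Dset_measurable[OF Z] by (rule Eint_dec_rearr_minus_add_le)
  also have "\<dots> \<le> (SUP Z\<in>Dset R. Eint (\<lambda>w. dec_rearr_minus X w * enn2ereal (dec_rearr Z w)))
                + (SUP Z\<in>Dset R. Eint (\<lambda>w. dec_rearr_minus Y w * enn2ereal (dec_rearr Z w)))"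
    using Z by (intro add_mono SUP_upper)
  finally show "Eint (\<lambda>w. dec_rearr_minus (\<lambda>x. X x + Y x) w * enn2ereal (dec_rearr Z w))
      \<le> (SUP Z\<in>Dset R. Eint (\<lambda>w. dec_rearr_minus X w * enn2ereal (dec_rearr Z w)))
        + (SUP Z\<in>Dset R. Eint (\<lambda>w. dec_rearr_minus Y w * enn2ereal (dec_rearr Z w)))" .
qed

lemma Rminus_mono_AE:
  assumes "X \<in> borel_measurable Omega" "Y \<in> borel_measurable Omega" "AE x in Omega. X x \<le> Y x"
  shows "Rminus R X \<le> Rminus R Y"
  unfolding Rminus_def using assms by (intro SUP_mono' Eint_mono dec_rearr_minus_mono_AE)

lemma Rminus_cmult:
  assumes "Dset R \<noteq> {}" and X: "X \<in> borel_measurable Omega" and "0 \<le> a"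
  shows "Rminus R (\<lambda>x. a * X x) = ereal a * Rminus R X"
proof (cases "a = 0")
  case True
  then show ?thesis using Rminus_const[OF assms(1), of 0] by (simp add: zero_ereal_def[symmetric])
next
  case False
  with \<open>0 \<le> a\<close> have "0 < a" by simp
  have "Eint (\<lambda>w. dec_rearr_minus (\<lambda>x. a * X x) w * enn2ereal (dec_rearr Y w))
      = ereal a * Eint (\<lambda>w. dec_rearr_minus X w * enn2ereal (dec_rearr Y w))" if "Y \<in> Dset R" for Y
    unfolding dec_rearr_minus_cmult[OF X \<open>0 < a\<close>]
    using X Dset_measurable[OF that]
    by (intro Eint_cmult \<open>0 < a\<close> borel_measurable_dec_rearr_minus borel_measurable_dec_rearr)
  then show ?thesis unfolding Rminus_def using SUP_ereal_cmult[OF \<open>0 < a\<close>] by simp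
qed

lemma Rminus_add_const:
  assumes "Dset R \<noteq> {}" and [measurable]: "X \<in> borel_measurable Omega"
  shows "Rminus R (\<lambda>x. X x + c) = Rminus R X + ereal c"
proof (rule antisym)
  show "Rminus R (\<lambda>x. X x + c) \<le> Rminus R X + ereal c"
    using Rminus_add_le[of X "\<lambda>_. c" R] Rminus_const[OF assms(1)] by simp
  have "Rminus R X \<le> Rminus R (\<lambda>x. X x + c) + ereal (- c)"
    using Rminus_add_le[of "\<lambda>x. X x + c" "\<lambda>_. - c" R] Rminus_const[OF assms(1)] by simp
  then show "Rminus R X + ereal c \<le> Rminus R (\<lambda>x. X x + c)"
    by (cases "Rminus R (\<lambda>x. X x + c)"; cases "Rminus R X") auto
qed

lemma Rminus_cong_distr:
  assumes "X \<in> borel_measurable Omega" "X' \<in> borel_measurable Omega"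
    and "distr Omega borel X = distr Omega borel X'"
  shows "Rminus R X = Rminus R X'"
  unfolding Rminus_def dec_rearr_minus_cong_distr[OF assms] ..

lemma Rminus_nonneg:
  assumes "Dset R \<noteq> {}"
    and rep: "\<forall>X\<in>Mplus. R X = (SUP Y \<in> Dset R. \<integral>\<^sup>+ w. dec_rearr X w * dec_rearr Y w \<partial>Omega)"
    and X[measurable]: "X \<in> borel_measurable Omega" and nonneg: "AE x in Omega. 0 \<le> X x"
  shows "Rminus R X = enn2ereal (R (\<lambda>x. ennreal (X x)))"
proof -
  let ?D = "dec_rearr (\<lambda>x. ennreal (X x))"
  have "Eint (\<lambda>w. dec_rearr_minus X w * enn2ereal (dec_rearr Y w))
      = enn2ereal (\<integral>\<^sup>+w. ?D w * dec_rearr Y w \<partial>Omega)" for Y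
  proof -
    have "AE w in Omega. dec_rearr_minus X w = enn2ereal (?D w)"
      using AE_Omega_less_1 by eventually_elim (simp add: dec_rearr_minus_nonneg[OF X nonneg])
    then have "(\<integral>\<^sup>+w. e2ennreal (d * dec_rearr_minus X w) * dec_rearr Y w \<partial>Omega)
        = (\<integral>\<^sup>+w. e2ennreal (d * enn2ereal (?D w)) * dec_rearr Y w \<partial>Omega)" for d
      by (intro nn_integral_cong_AE) (auto elim: eventually_mono)
    from this[of 1] this[of "-1"] show ?thesis
      unfolding Eint_mult_eq by (simp add: e2ennreal_neg zero_ennreal.rep_eq)
  qed
  then have "Rminus R X = (SUP Y\<in>Dset R. enn2ereal (\<integral>\<^sup>+w. ?D w * dec_rearr Y w \<partial>Omega))"
    by (simp add: Rminus_def)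
  also have "\<dots> = enn2ereal (R (\<lambda>x. ennreal (X x)))"
    using rep \<open>Dset R \<noteq> {}\<close> by (simp add: enn2ereal_SUP Mplus_def)
  finally show ?thesis .
qed

theorem theorem12:
  fixes R :: "(real \<Rightarrow> ennreal) \<Rightarrow> ennreal"
  assumes "ri_function_norm R"
    and "\<forall>X\<in>Mplus. R X = (SUP Y \<in> Dset R. \<integral>\<^sup>+ w. dec_rearr X w * dec_rearr Y w \<partial>Omega)"
  shows "coherent_risk_measure (Rminus R) \<and> law_invariant (Rminus R) \<and>
    (\<forall>X\<in>Mreal. (AE x in Omega. X x \<ge> 0) \<longrightarrow>
        Rminus R X = enn2ereal (R (\<lambda>x. ennreal (X x)))) \<and>
    (\<forall>X\<in>Mreal. \<forall>c::real. Rminus R (\<lambda>x. X x + c) = Rminus R X + ereal c)"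
proof -
  have D: "Dset R \<noteq> {}" using assms by (rule Dset_nonempty)
  have "coherent_risk_measure (Rminus R)"
    unfolding coherent_risk_measure_def Mreal_def
    using Rminus_cmult[OF D] Rminus_add_le Rminus_add_const[OF D] Rminus_mono_AE by blast
  moreover have "law_invariant (Rminus R)"
    unfolding law_invariant_def Mreal_def using Rminus_cong_distr by blast
  ultimately show ?thesis
    unfolding Mreal_def using Rminus_nonneg[OF D assms(2)] Rminus_add_const[OF D] by blast
qed

end
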